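(* Let $\alpha>-1$, $\beta>0$, $n\ge 0$, and let $p_n(t)=\sum_{k=0}^n h_{n,k}\frac{(-\beta t)^k}{k!}$ with coefficients $h_{n,k}$ as in the context. If $p_n(t)>0$ for all $t>0$, then $(-1)^n h_{n,n}\ge 0$ and $h_{n,0}\ge 0$. Conversely, if $h_{n,0}>0$ and $(-1)^n h_{n,n}>0$, then there exist $t_1>0$ and $t_2>0$ (not necessarily distinct, possibly infinite) such that $p_n(t)>0$ for all $t\in(0,t_1)\cup(t_2,+\infty)$.
   Context: Here $T$ is a positive random variable with finite moments (in the paper, the first-passage time of a CIR process through a constant threshold), $\mathcal{B}_j^{(\alpha)}=\sum_{i=0}^j\binom{j}{i}\frac{(-\beta)^i\mathbb{E}[T^i]}{\Gamma(\alpha+i+1)}$, and $h_{n,k}=\sum_{j=k}^n\mathcal{B}_j^{(\alpha)}\binom{\alpha+j}{j-k}$, where $\binom{\alpha+j}{j-k}=1$ if $j=k$ and $\binom{\alpha+j}{j-k}=\frac{(\alpha+j)(\alpha+j-1)\cdots(\alpha+k+1)}{(j-k)!}$ if $j>k$. The truncated Laguerre–gamma approximation of the density of $T$ is $\hat g_n(t)=f_{\alpha,\beta}(t)p_n(t)$ with $f_{\alpha,\beta}(t)=\beta(\beta t)^\alpha e^{-\beta t}/\Gamma(\alpha+1)$. *)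

theory Defs
  imports "HOL-Probability.Probability"
begin

definition moment :: "'a measure \<Rightarrow> ('a \<Rightarrow> real) \<Rightarrow> nat \<Rightarrow> real" where
  "moment M T i = integral\<^sup>L M (\<lambda>x. T x ^ i)"

definition B_coef :: "'a measure \<Rightarrow> ('a \<Rightarrow> real) \<Rightarrow> real \<Rightarrow> real \<Rightarrow> nat \<Rightarrow> real" where
  "B_coef M T \<alpha> \<beta> j =
     (\<Sum>i=0..j. real (j choose i) * (-\<beta>) ^ i * moment M T i / Gamma (\<alpha> + real i + 1))"

definition h_coef :: "'a measure \<Rightarrow> ('a \<Rightarrow> real) \<Rightarrow> real \<Rightarrow> real \<Rightarrow> nat \<Rightarrow> nat \<Rightarrow> real" where
  "h_coef M T \<alpha> \<beta> n k = (\<Sum>j=k..n. B_coef M T \<alpha> \<beta> j * ((\<alpha> + real j) gchoose (j - k)))"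

definition p_poly :: "'a measure \<Rightarrow> ('a \<Rightarrow> real) \<Rightarrow> real \<Rightarrow> real \<Rightarrow> nat \<Rightarrow> real \<Rightarrow> real" where
  "p_poly M T \<alpha> \<beta> n t = (\<Sum>k=0..n. h_coef M T \<alpha> \<beta> n k * (-\<beta> * t) ^ k / fact k)"

end

theory Submission
  imports Defs "HOL-Computational_Algebra.Polynomial"
begin

text \<open>As a function of \<open>t\<close>, \<open>p\<^sub>n\<close> is a real polynomial with constant term \<open>h\<^sub>n\<^sub>,\<^sub>0\<close> and
  leading coefficient \<open>(-\<beta>)\<^sup>n h\<^sub>n\<^sub>,\<^sub>n / n!\<close>, whose sign is that of \<open>(-1)\<^sup>n h\<^sub>n\<^sub>,\<^sub>n\<close>.
  A polynomial takes the sign of its constant term near \<open>0\<close> and the sign of its leading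
  coefficient near \<open>+\<infinity>\<close>, which gives both directions.\<close>

lemma eventually_sum_powers_pos_at_top:
  fixes c :: "nat \<Rightarrow> real"
  assumes "0 < c n"
  shows "eventually (\<lambda>t. 0 < (\<Sum>k=0..n. c k * t ^ k)) at_top"
proof -
  define P where "P = (\<Sum>k=0..n. monom (c k) k)"
  have coeff_P: "coeff P i = (if i \<le> n then c i else 0)" for i
    unfolding P_def coeff_sum by (simp add: coeff_monom)
  have "degree P \<le> n"
    unfolding P_def by (rule degree_sum_le) (auto intro: order.trans[OF degree_monom_le])
  moreover have "n \<le> degree P"
    using assms coeff_P[of n] by (intro le_degree) auto
  ultimately have lead_coeff_P: "lead_coeff P = c n"
    using coeff_P by simp
  have poly_P: "poly P t = (\<Sum>k=0..n. c k * t ^ k)" for t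
    unfolding P_def poly_sum by (simp add: poly_monom)
  obtain t0 where "\<forall>t\<ge>t0. lead_coeff P \<le> poly P t"
    using poly_pinfty_gt_lc[of P] lead_coeff_P assms by auto
  then show ?thesis
    unfolding eventually_at_top_linorder poly_P[symmetric] lead_coeff_P
    using assms by (meson less_le_trans)
qed

lemma sum_powers_tendsto_at_right_0:
  fixes c :: "nat \<Rightarrow> real"
  shows "((\<lambda>t. \<Sum>k=0..n. c k * t ^ k) \<longlongrightarrow> c 0) (at_right 0)"
proof -
  have "((\<lambda>t. \<Sum>k=0..n. c k * t ^ k) \<longlongrightarrow> (\<Sum>k=0..n. c k * 0 ^ k)) (at_right (0::real))"
    by (intro tendsto_intros)
  moreover have "(\<Sum>k=0..n. c k * (0::real) ^ k) = c 0"
    by (simp add: sum.atLeast_Suc_atMost)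
  ultimately show ?thesis by simp
qed

lemma sum_powers_pos_imp_extreme_coeffs_nonneg:
  fixes c :: "nat \<Rightarrow> real"
  assumes pos: "\<forall>t>0. 0 < (\<Sum>k=0..n. c k * t ^ k)"
  shows "0 \<le> c n \<and> 0 \<le> c 0"
proof
  show "0 \<le> c n"
  proof (rule ccontr)
    assume "\<not> 0 \<le> c n"
    then have "eventually (\<lambda>t. 0 < (\<Sum>k=0..n. - c k * t ^ k)) at_top"
      by (intro eventually_sum_powers_pos_at_top) simp
    moreover have "eventually (\<lambda>t::real. 0 < t) at_top"
      by (rule eventually_gt_at_top)
    ultimately have "eventually (\<lambda>t::real. False) at_top"
      by eventually_elim (use pos in \<open>auto simp: sum_negf\<close>)
    then show False by simp
  qed
  have "eventually (\<lambda>t. 0 \<le> (\<Sum>k=0..n. c k * t ^ k)) (at_right 0)"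
    using pos by (auto simp: eventually_at_right_field intro!: exI[of _ 1] less_imp_le)
  then show "0 \<le> c 0"
    by (rule tendsto_lowerbound[OF sum_powers_tendsto_at_right_0]) simp
qed

lemma sum_powers_pos_near_0_and_at_top:
  fixes c :: "nat \<Rightarrow> real"
  assumes "0 < c 0" and "0 < c n"
  shows "\<exists>t1>0. \<exists>t2>0. \<forall>t. (0 < t \<and> t < t1 \<or> t2 < t) \<longrightarrow> 0 < (\<Sum>k=0..n. c k * t ^ k)"
proof -
  obtain t1 where "t1 > 0" and near_0: "\<forall>t. 0 < t \<and> t < t1 \<longrightarrow> 0 < (\<Sum>k=0..n. c k * t ^ k)"
    using order_tendstoD(1)[OF sum_powers_tendsto_at_right_0[of c n] assms(1)]
    by (auto simp: eventually_at_right_field)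
  obtain t0 where near_top: "\<forall>t\<ge>t0. 0 < (\<Sum>k=0..n. c k * t ^ k)"
    using eventually_sum_powers_pos_at_top[of c n, OF assms(2)] by (auto simp: eventually_at_top_linorder)
  have "\<forall>t. (0 < t \<and> t < t1 \<or> max t0 1 < t) \<longrightarrow> 0 < (\<Sum>k=0..n. c k * t ^ k)"
    using near_0 near_top by auto
  moreover have "0 < max t0 1"
    by simp
  ultimately show ?thesis
    using \<open>t1 > 0\<close> by blast
qed

lemma p_poly_eq_sum_powers:
  "p_poly M T \<alpha> \<beta> n t = (\<Sum>k=0..n. h_coef M T \<alpha> \<beta> n k * (-\<beta>) ^ k / fact k * t ^ k)"
  unfolding p_poly_def by (intro sum.cong refl) (simp add: power_mult_distrib[symmetric])

theorem proposition2:
  fixes M :: "'a measure" and T :: "'a \<Rightarrow> real"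
    and \<alpha> \<beta> :: real and n :: nat
  assumes "prob_space M"
    and "T \<in> borel_measurable M"
    and "AE x in M. T x > 0"
    and "\<And>i::nat. integrable M (\<lambda>x. T x ^ i)"
    and "\<alpha> > -1" and "\<beta> > 0"
  shows "((\<forall>t>0. p_poly M T \<alpha> \<beta> n t > 0) \<longrightarrow>
            (-1) ^ n * h_coef M T \<alpha> \<beta> n n \<ge> 0 \<and> h_coef M T \<alpha> \<beta> n 0 \<ge> 0)
       \<and> ((h_coef M T \<alpha> \<beta> n 0 > 0 \<and> (-1) ^ n * h_coef M T \<alpha> \<beta> n n > 0) \<longrightarrow>
            (\<exists>t1>0. \<exists>t2>0. \<forall>t. ((0 < t \<and> t < t1) \<or> t2 < t) \<longrightarrow> p_poly M T \<alpha> \<beta> n t > 0))"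
proof -
  define h where "h = h_coef M T \<alpha> \<beta> n"
  define c where "c k = h k * (-\<beta>) ^ k / fact k" for k
  have p_poly_c: "p_poly M T \<alpha> \<beta> n t = (\<Sum>k=0..n. c k * t ^ k)" for t
    unfolding p_poly_eq_sum_powers c_def h_def ..
  define q where "q = \<beta> ^ n / fact n"
  have "0 < q"
    using \<open>\<beta> > 0\<close> by (simp add: q_def)
  then have "0 \<le> a * q \<longleftrightarrow> 0 \<le> a" and "0 < a * q \<longleftrightarrow> 0 < a" for a
    by (simp_all add: zero_le_mult_iff zero_less_mult_iff)
  moreover have "c n = (-1) ^ n * h n * q"
    by (simp add: c_def q_def power_minus[of \<beta>])
  moreover have "c 0 = h 0"
    by (simp add: c_def)
  ultimately show ?thesis
    using sum_powers_pos_imp_extreme_coeffs_nonneg[of c n] sum_powers_pos_near_0_and_at_top[of c n]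
    unfolding p_poly_c h_def by auto
qed

end
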